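(* Let $a$ be a positive integer and let $\alpha,\beta$ be $\tilde{\mathbb N}$-compositions. Then $$\varphi\big(M_{(a,\alpha*\beta)}\big)=(-1)^{\ell_\varepsilon(\alpha)+\ell_\varepsilon(\beta)}M_{(a,\bar\alpha*\bar\beta)}.$$
   Context: $\tilde{\mathbb N}=\mathbb N\cup\{\varepsilon\}$ with $0+\varepsilon=\varepsilon+\varepsilon=\varepsilon$ and $n+\varepsilon=n$ for integers $n\ge1$. $\mathbf{k}$ is a commutative ring containing $\mathbb Q$; $\mathbf{k}[[X]]_{\tilde{\mathbb N}}$, $X=\{x_1<x_2<\cdots\}$, is the algebra of possibly infinite linear combinations of formal monomials $\prod x_i^{f(x_i)}$ with $f$ finitely supported $\tilde{\mathbb N}$-valued, multiplied by adding exponents. An $\tilde{\mathbb N}$-composition is a finite (possibly empty) sequence of elements of $\{\varepsilon,1,2,\dots\}$; $M_{(\alpha_1,\dots,\alpha_k)}=\sum_{1\le i_1<\cdots<i_k}x_{i_1}^{\alpha_1}\cdots x_{i_k}^{\alpha_k}$, $M_\emptyset=1$, and $\mathrm{WCQSym}$ is their (free) $\mathbf k$-span; $\mathrm{QSym}$ is the span of $M_\alpha$ with all entries positive integers. The quasi-shuffle product $*$ on formal linear combinations of $\tilde{\mathbb N}$-compositions is bilinear with $\emptyset*\gamma=\gamma*\emptyset=\gamma$ and $(c,\gamma)*(d,\delta)=(c,\gamma*(d,\delta))+(d,(c,\gamma)*\delta)+(c+d,\gamma*\delta)$; $M$ is extended linearly, and $(a,\cdot)$ (prepending $a$) is extended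 linearly. $\ell_\varepsilon(\alpha)$ is the number of entries equal to $\varepsilon$, $\bar\alpha$ is $\alpha$ with its $\varepsilon$ entries deleted. $\mathcal C_\varepsilon$ is the set of $\tilde{\mathbb N}$-compositions with first entry $\varepsilon$, $\mathcal C_N$ the set of all others. $\varphi:\mathrm{WCQSym}\to\mathrm{QSym}$ is the $\mathbf k$-linear map with $\varphi(M_\gamma)=(-1)^{\ell_\varepsilon(\gamma)}M_{\bar\gamma}$ for $\gamma\in\mathcal C_N$ and $\varphi(M_\gamma)=0$ for $\gamma\in\mathcal C_\varepsilon$. *)

theory Defs
  imports Main
begin

text \<open>Elements of tilde N: Eps stands for epsilon, Num n for the integer n
  (compositions only use Num n with n \<ge> 1).\<close>
datatype tn = Eps | Num nat

fun tadd :: "tn \<Rightarrow> tn \<Rightarrow> tn" where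
  "tadd Eps Eps = Eps"
| "tadd Eps (Num n) = (if n = 0 then Eps else Num n)"
| "tadd (Num n) Eps = (if n = 0 then Eps else Num n)"
| "tadd (Num m) (Num n) = Num (m + n)"

type_synonym comp = "tn list"

definition is_comp :: "comp \<Rightarrow> bool" where
  "is_comp \<gamma> \<longleftrightarrow> (\<forall>x\<in>set \<gamma>. x = Eps \<or> (\<exists>n\<ge>1. x = Num n))"

text \<open>Formal linear combinations of compositions with coefficients in 'k,
  represented by their (finitely supported) coefficient functions.
  Via gamma \<mapsto> M_gamma, such a combination f also represents the element
  sum f(gamma) M_gamma of WCQSym (the M_gamma form a basis of WCQSym, and the
  M_gamma with positive entries a basis of QSym); M extended linearly is thus
  the identity on coefficient functions.\<close>
type_synonym 'k lc = "comp \<Rightarrow> 'k"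

definition single_lc :: "comp \<Rightarrow> 'k::zero_neq_one lc" where
  "single_lc \<gamma> = (\<lambda>\<delta>. if \<delta> = \<gamma> then 1 else 0)"

text \<open>Prepending an entry a, extended linearly: (a, f).\<close>
definition prep :: "tn \<Rightarrow> 'k::zero lc \<Rightarrow> 'k lc" where
  "prep a f = (\<lambda>\<delta>. case \<delta> of [] \<Rightarrow> 0 | x # r \<Rightarrow> (if x = a then f r else 0))"

fun qsh :: "comp \<Rightarrow> comp \<Rightarrow> 'k::comm_ring_1 lc" where
  "qsh [] \<gamma> = single_lc \<gamma>"
| "qsh \<gamma> [] = single_lc \<gamma>"
| "qsh (c # \<gamma>) (d # \<delta>) =
     (\<lambda>\<rho>. prep c (qsh \<gamma> (d # \<delta>)) \<rho> + prep d (qsh (c # \<gamma>) \<delta>) \<rho>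
           + prep (tadd c d) (qsh \<gamma> \<delta>) \<rho>)"

definition ell_eps :: "comp \<Rightarrow> nat" where
  "ell_eps \<gamma> = length (filter (\<lambda>x. x = Eps) \<gamma>)"

definition bar :: "comp \<Rightarrow> comp" where
  "bar \<gamma> = filter (\<lambda>x. x \<noteq> Eps) \<gamma>"

definition in_C_eps :: "comp \<Rightarrow> bool" where
  "in_C_eps \<gamma> \<longleftrightarrow> (\<gamma> \<noteq> [] \<and> hd \<gamma> = Eps)"

text \<open>phi : WCQSym \<rightarrow> QSym, on coefficient functions (f has finite support):
  phi(M_gamma) = (-1)^{ell_eps gamma} M_{bar gamma} for gamma in C_N, 0 for gamma in C_eps.\<close>
definition phi :: "'k::comm_ring_1 lc \<Rightarrow> 'k lc" where
  "phi f = (\<lambda>\<delta>. \<Sum>\<gamma>\<in>{\<gamma>. f \<gamma> \<noteq> 0 \<and> \<not> in_C_eps \<gamma> \<and> bar \<gamma> = \<delta>}.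
                 (-1) ^ ell_eps \<gamma> * f \<gamma>)"

end

theory Submission
  imports Defs
begin

text \<open>Drop the restriction to C_N from phi and consider the linear map signed_bar, i.e.
  psi(M_gamma) = (-1)^(ell_eps gamma) M_(bar gamma) on all of WCQSym. It turns prepending
  epsilon into a sign change and commutes with prepending a positive entry, so pushing the
  recursion of the quasi-shuffle through psi gives
  psi(alpha * beta) = (-1)^(ell_eps alpha + ell_eps beta) (bar alpha * bar beta):
  if both heads are epsilon, the three terms contribute with signs +, +, - (as
  epsilon + epsilon = epsilon); if exactly one head is epsilon, the two terms headed by the
  other entry n cancel (as n + epsilon = n). On combinations of compositions starting with
  a positive entry, phi and psi agree.\<close>

definition finite_support :: "'k::zero lc \<Rightarrow> bool" where
  "finite_support f \<longleftrightarrow> finite {\<gamma>. f \<gamma> \<noteq> 0}"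

definition eps_sign :: "comp \<Rightarrow> 'k::comm_ring_1" where
  "eps_sign \<gamma> = (-1) ^ ell_eps \<gamma>"

definition signed_bar :: "'k::comm_ring_1 lc \<Rightarrow> 'k lc" where
  "signed_bar f = (\<lambda>\<delta>. \<Sum>\<gamma>\<in>{\<gamma>. f \<gamma> \<noteq> 0 \<and> bar \<gamma> = \<delta>}. eps_sign \<gamma> * f \<gamma>)"

lemma bar_simps [simp]:
  "bar [] = []" "bar (Eps # \<gamma>) = bar \<gamma>" "bar (Num n # \<gamma>) = Num n # bar \<gamma>"
  by (auto simp: bar_def)

lemma ell_eps_simps [simp]:
  "ell_eps [] = 0" "ell_eps (Eps # \<gamma>) = Suc (ell_eps \<gamma>)" "ell_eps (Num n # \<gamma>) = ell_eps \<gamma>"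
  by (auto simp: ell_eps_def)

lemma eps_sign_simps [simp]:
  "eps_sign [] = 1" "eps_sign (Eps # \<gamma>) = - eps_sign \<gamma>" "eps_sign (Num n # \<gamma>) = eps_sign \<gamma>"
  by (auto simp: eps_sign_def)

lemma is_comp_Cons:
  "is_comp (c # \<gamma>) \<longleftrightarrow> (c = Eps \<or> (\<exists>n\<ge>1. c = Num n)) \<and> is_comp \<gamma>"
  by (auto simp: is_comp_def)

lemma prep_simps [simp]:
  "prep a f [] = 0" "prep a f (b # \<gamma>) = (if b = a then f \<gamma> else 0)"
  by (auto simp: prep_def)

lemma prep_nonzeroD: "prep a f \<delta> \<noteq> 0 \<Longrightarrow> \<exists>\<gamma>. \<delta> = a # \<gamma> \<and> f \<gamma> \<noteq> 0"
  by (cases \<delta>) (auto split: if_splits)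

lemma prep_scale: "prep a (\<lambda>\<delta>. k * f \<delta>) = (\<lambda>\<delta>. (k::'k::comm_ring_1) * prep a f \<delta>)"
  by (auto simp: prep_def split: list.splits)

lemma prep_uminus: "prep a (\<lambda>\<delta>. - f \<delta>) = (\<lambda>\<delta>. - prep a (f::'k::comm_ring_1 lc) \<delta>)"
  by (auto simp: prep_def split: list.splits)

lemma qsh_Nil_right: "qsh \<gamma> [] = single_lc \<gamma>"
  by (cases \<gamma>) auto

lemma finite_support_single_lc: "finite_support (single_lc \<gamma>)"
  unfolding finite_support_def single_lc_def
  by (rule finite_subset[of _ "{\<gamma>}"]) auto

lemma finite_support_prep: "finite_support f \<Longrightarrow> finite_support (prep a f)"
  unfolding finite_support_def
  by (rule finite_subset[of _ "Cons a ` {\<gamma>. f \<gamma> \<noteq> 0}"]) (auto dest!: prep_nonzeroD)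

lemma finite_support_add:
  "finite_support (f::'k::monoid_add lc) \<Longrightarrow> finite_support g \<Longrightarrow> finite_support (\<lambda>\<gamma>. f \<gamma> + g \<gamma>)"
  unfolding finite_support_def
  by (rule finite_subset[of _ "{\<gamma>. f \<gamma> \<noteq> 0} \<union> {\<gamma>. g \<gamma> \<noteq> 0}"]) auto

lemma finite_support_qsh: "finite_support (qsh \<alpha> \<beta>)"
  by (induction \<alpha> \<beta> rule: qsh.induct)
    (auto simp: finite_support_single_lc intro!: finite_support_add finite_support_prep)

lemma signed_bar_superset:
  assumes "finite S" "{\<gamma>. f \<gamma> \<noteq> 0} \<subseteq> S"
  shows "signed_bar f \<delta> = (\<Sum>\<gamma>\<in>{\<gamma>\<in>S. bar \<gamma> = \<delta>}. eps_sign \<gamma> * f \<gamma>)"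
  unfolding signed_bar_def by (rule sum.mono_neutral_left) (use assms in auto)

lemma signed_bar_add:
  assumes "finite_support f" "finite_support g"
  shows "signed_bar (\<lambda>\<gamma>. f \<gamma> + g \<gamma>) = (\<lambda>\<delta>. signed_bar f \<delta> + signed_bar g \<delta>)"
proof
  fix \<delta>
  let ?S = "{\<gamma>. f \<gamma> \<noteq> 0} \<union> {\<gamma>. g \<gamma> \<noteq> 0}"
  have "finite ?S" using assms unfolding finite_support_def by simp
  then show "signed_bar (\<lambda>\<gamma>. f \<gamma> + g \<gamma>) \<delta> = signed_bar f \<delta> + signed_bar g \<delta>"
    by (subst (1 2 3) signed_bar_superset[where S = ?S])
      (auto simp: sum.distrib distrib_left)
qed

lemma signed_bar_single_lc:
  "signed_bar (single_lc \<gamma>) = (\<lambda>\<delta>. (eps_sign \<gamma> :: 'k::comm_ring_1) * single_lc (bar \<gamma>) \<delta>)"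
proof
  fix \<delta>
  have "{\<rho>. single_lc \<gamma> \<rho> \<noteq> (0::'k) \<and> bar \<rho> = \<delta>} = (if bar \<gamma> = \<delta> then {\<gamma>} else {})"
    by (auto simp: single_lc_def)
  then show "signed_bar (single_lc \<gamma>) \<delta> = (eps_sign \<gamma> :: 'k) * single_lc (bar \<gamma>) \<delta>"
    unfolding signed_bar_def by (auto simp: single_lc_def)
qed

lemma signed_bar_prep_Eps: "signed_bar (prep Eps f) = (\<lambda>\<delta>. - signed_bar f \<delta>)"
proof
  fix \<delta>
  have "{\<gamma>. prep Eps f \<gamma> \<noteq> 0 \<and> bar \<gamma> = \<delta>} = Cons Eps ` {\<gamma>. f \<gamma> \<noteq> 0 \<and> bar \<gamma> = \<delta>}"
    by (auto dest!: prep_nonzeroD)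
  then show "signed_bar (prep Eps f) \<delta> = - signed_bar f \<delta>"
    unfolding signed_bar_def by (simp add: sum.reindex sum_negf[symmetric])
qed

lemma signed_bar_prep_Num: "signed_bar (prep (Num n) f) = prep (Num n) (signed_bar f)"
proof
  fix \<delta>
  have "{\<gamma>. prep (Num n) f \<gamma> \<noteq> 0 \<and> bar \<gamma> = \<delta>}
        = (case \<delta> of [] \<Rightarrow> {}
           | x # \<rho> \<Rightarrow> if x = Num n then Cons (Num n) ` {\<gamma>. f \<gamma> \<noteq> 0 \<and> bar \<gamma> = \<rho>} else {})"
    by (auto dest!: prep_nonzeroD split: list.splits)
  then show "signed_bar (prep (Num n) f) \<delta> = prep (Num n) (signed_bar f) \<delta>"
    unfolding signed_bar_def by (simp add: prep_def sum.reindex split: list.splits)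
qed

lemma signed_bar_qsh:
  "is_comp \<alpha> \<Longrightarrow> is_comp \<beta> \<Longrightarrow>
   signed_bar (qsh \<alpha> \<beta>) = (\<lambda>\<delta>. eps_sign \<alpha> * eps_sign \<beta> * (qsh (bar \<alpha>) (bar \<beta>) \<delta> :: 'k::comm_ring_1))"
proof (induction \<alpha> \<beta> rule: qsh.induct)
  case (1 \<beta>)
  then show ?case by (simp add: signed_bar_single_lc)
next
  case (2 c \<gamma>)
  then show ?case
    by (simp add: signed_bar_single_lc qsh_Nil_right del: bar_simps(2,3) eps_sign_simps(2,3))
next
  case (3 c \<gamma> d \<delta>)
  from "3.prems" obtain c_ok: "c = Eps \<or> (\<exists>n\<ge>1. c = Num n)" and "is_comp \<gamma>"
    and d_ok: "d = Eps \<or> (\<exists>n\<ge>1. d = Num n)" and "is_comp \<delta>"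
    by (auto simp: is_comp_Cons)
  note IH = "3.IH"(1)[OF \<open>is_comp \<gamma>\<close> "3.prems"(2)] "3.IH"(2)[OF "3.prems"(1) \<open>is_comp \<delta>\<close>]
    "3.IH"(3)[OF \<open>is_comp \<gamma>\<close> \<open>is_comp \<delta>\<close>]
  have qsh_step: "signed_bar (qsh (c # \<gamma>) (d # \<delta>) :: 'k lc) =
      (\<lambda>\<rho>. signed_bar (prep c (qsh \<gamma> (d # \<delta>))) \<rho> + signed_bar (prep d (qsh (c # \<gamma>) \<delta>)) \<rho>
           + signed_bar (prep (tadd c d) (qsh \<gamma> \<delta>)) \<rho>)"
    by (simp only: qsh.simps(3))
      (simp add: signed_bar_add finite_support_add finite_support_prep finite_support_qsh)
  from c_ok d_ok show ?case
    using qsh_step IH by (elim disjE exE conjE)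
      (auto simp: signed_bar_prep_Eps signed_bar_prep_Num prep_scale prep_uminus algebra_simps)
qed

lemma phi_prep_Num: "phi (prep (Num a) f) = signed_bar (prep (Num a) f)"
proof
  fix \<delta>
  have "{\<gamma>. prep (Num a) f \<gamma> \<noteq> 0 \<and> \<not> in_C_eps \<gamma> \<and> bar \<gamma> = \<delta>}
        = {\<gamma>. prep (Num a) f \<gamma> \<noteq> 0 \<and> bar \<gamma> = \<delta>}"
    by (auto simp: in_C_eps_def dest!: prep_nonzeroD)
  then show "phi (prep (Num a) f) \<delta> = signed_bar (prep (Num a) f) \<delta>"
    unfolding phi_def signed_bar_def eps_sign_def by simp
qed

theorem lemma3p5:
  fixes a :: nat and \<alpha> \<beta> :: comp
  assumes k_Q: "\<forall>n::nat. n > 0 \<longrightarrow> (\<exists>y::'k::comm_ring_1. of_nat n * y = 1)"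
    and a_pos: "a \<ge> 1"
    and \<alpha>: "is_comp \<alpha>" and \<beta>: "is_comp \<beta>"
  shows "phi (prep (Num a) (qsh \<alpha> \<beta> :: 'k lc))
         = (\<lambda>\<delta>. (-1) ^ (ell_eps \<alpha> + ell_eps \<beta>) * prep (Num a) (qsh (bar \<alpha>) (bar \<beta>)) \<delta>)"
proof -
  have "phi (prep (Num a) (qsh \<alpha> \<beta> :: 'k lc)) = prep (Num a) (signed_bar (qsh \<alpha> \<beta>))"
    by (simp add: phi_prep_Num signed_bar_prep_Num)
  also have "\<dots> = (\<lambda>\<delta>. eps_sign \<alpha> * eps_sign \<beta> * prep (Num a) (qsh (bar \<alpha>) (bar \<beta>)) \<delta>)"
    by (simp add: signed_bar_qsh[OF \<alpha> \<beta>] prep_scale)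
  finally show ?thesis
    by (simp add: eps_sign_def power_add)
qed

end
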